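(* For every reduction $S$ in a TRS the following equivalences hold: (i) $S$ starting in $s$ is strongly $p$-continuous and total iff $S$ starting in $s$ is strongly $m$-continuous; and (ii) $S$ strongly $p$-converges from $s$ to $t$ and is total iff $S$ strongly $m$-converges from $s$ to $t$.
   Context: Partial terms are (possibly infinite) terms over $\Sigma_\bot=\Sigma\uplus\{\bot\}$; total terms contain no $\bot$. $s\le_\bot t$ iff $s$ arises from $t$ by replacing some subterm occurrences by $\bot$; this is a complete semilattice. For a non-empty sequence, $\liminf_{\iota\to\alpha}a_\iota=\bigvee_{\beta<\alpha}\bigwedge_{\beta\le\iota<\alpha}a_\iota$. On total terms $d(s,t)=2^{-k}$, $k$ the minimal depth where they differ. For a reduction $S=(t_\iota\to_{\pi_\iota}t_{\iota+1})_{\iota<\alpha}$ let $c_\iota$ be $t_\iota$ with the subterm at $\pi_\iota$ replaced by $\bot$. $S$ is strongly $p$-continuous if $\liminf_{\iota\to\lambda}c_\iota=t_\lambda$ for every limit $\lambda<\alpha$; it strongly $p$-converges to $t$ if it is strongly $p$-continuous and either $S$ is closed and $t$ is its last term, or $S$ is open and $t=\liminf_{\iota\to\alpha}c_\iota$. $S$ is strongly $m$-continuous if for every limit $\lambda<\alpha$, $\lim_{\iota\to\lambda}t_\iota=t_\lambda$ in $d$ and the depths $|\pi_\iota|$ tend to infinity as $\iota\to\lambda$; it strongly $m$-converges to $t$ if it is strongly $m$-continuous, $t=\lim_{\iota\to\hat\alpha}t_\iota$ ($\hat\alpha=\alpha+1$ for closed, $\alpha$ for open $S$), and, if $S$ is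 open, $|\pi_\iota|$ tends to infinity as $\iota\to\alpha$. "Total" means all terms of $S$ and the final term are total. *)

theory Defs
  imports Complex_Main
begin

text \<open>Node labels: function symbols of the signature, variables, and the extra
  nullary symbol bottom.  A term is a partial map from positions to labels.\<close>

datatype ('f, 'v) sym = FunS 'f | VarS 'v | BotS

type_synonym ('f, 'v) pterm = "nat list \<Rightarrow> ('f, 'v) sym option"

definition wf_term :: "('f \<Rightarrow> nat) \<Rightarrow> ('f, 'v) pterm \<Rightarrow> bool" where
  "wf_term ar t \<longleftrightarrow> t [] \<noteq> None \<and>
     (\<forall>p i. t (p @ [i]) \<noteq> None \<longleftrightarrow> (\<exists>f. t p = Some (FunS f) \<and> i < ar f))"

definition pos :: "('f, 'v) pterm \<Rightarrow> nat list set" where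
  "pos t = {p. t p \<noteq> None}"

definition total_term :: "('f, 'v) pterm \<Rightarrow> bool" where
  "total_term t \<longleftrightarrow> (\<forall>p. t p \<noteq> Some BotS)"

definition vars_term :: "('f, 'v) pterm \<Rightarrow> 'v set" where
  "vars_term t = {x. \<exists>p. t p = Some (VarS x)}"

definition bot_term :: "('f, 'v) pterm" where
  "bot_term = (\<lambda>p. if p = [] then Some BotS else None)"

definition strict_prefix_pos :: "nat list \<Rightarrow> nat list \<Rightarrow> bool" where
  "strict_prefix_pos q p \<longleftrightarrow> take (length q) p = q \<and> length q < length p"

definition subterm_at :: "('f, 'v) pterm \<Rightarrow> nat list \<Rightarrow> ('f, 'v) pterm" where
  "subterm_at t q = (\<lambda>p. t (q @ p))"

definition replace_at :: "('f, 'v) pterm \<Rightarrow> nat list \<Rightarrow> ('f, 'v) pterm \<Rightarrow> ('f, 'v) pterm" where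
  "replace_at t q u = (\<lambda>p. if take (length q) p = q then u (drop (length q) p) else t p)"

fun inst :: "('v \<Rightarrow> ('f, 'v) pterm) \<Rightarrow> ('f, 'v) pterm \<Rightarrow> ('f, 'v) pterm" where
  "inst \<sigma> r [] = (case r [] of Some (VarS x) \<Rightarrow> \<sigma> x [] | c \<Rightarrow> c)"
| "inst \<sigma> r (i # p) = (case r [] of Some (VarS x) \<Rightarrow> \<sigma> x (i # p)
                                   | _ \<Rightarrow> inst \<sigma> (\<lambda>q. r (i # q)) p)"

definition le_bot :: "('f, 'v) pterm \<Rightarrow> ('f, 'v) pterm \<Rightarrow> bool" where
  "le_bot s t \<longleftrightarrow> (\<exists>P \<subseteq> pos t.
      s = (\<lambda>p. if \<exists>q\<in>P. strict_prefix_pos q p then None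
               else if p \<in> P then Some BotS else t p))"

definition is_glb :: "('f \<Rightarrow> nat) \<Rightarrow> ('f, 'v) pterm set \<Rightarrow> ('f, 'v) pterm \<Rightarrow> bool" where
  "is_glb ar A x \<longleftrightarrow> wf_term ar x \<and> (\<forall>a\<in>A. le_bot x a) \<and>
     (\<forall>y. wf_term ar y \<and> (\<forall>a\<in>A. le_bot y a) \<longrightarrow> le_bot y x)"

definition is_lub :: "('f \<Rightarrow> nat) \<Rightarrow> ('f, 'v) pterm set \<Rightarrow> ('f, 'v) pterm \<Rightarrow> bool" where
  "is_lub ar A x \<longleftrightarrow> wf_term ar x \<and> (\<forall>a\<in>A. le_bot a x) \<and>
     (\<forall>y. wf_term ar y \<and> (\<forall>a\<in>A. le_bot a y) \<longrightarrow> le_bot x y)"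

definition is_liminf :: "('f \<Rightarrow> nat) \<Rightarrow> ('i::wellorder \<Rightarrow> ('f, 'v) pterm) \<Rightarrow> 'i \<Rightarrow> ('f, 'v) pterm \<Rightarrow> bool" where
  "is_liminf ar a \<alpha> u \<longleftrightarrow> (\<exists>g. (\<forall>\<beta><\<alpha>. is_glb ar {a \<iota> | \<iota>. \<beta> \<le> \<iota> \<and> \<iota> < \<alpha>} (g \<beta>)) \<and>
                                is_lub ar (g ` {\<beta>. \<beta> < \<alpha>}) u)"

definition term_dist :: "('f, 'v) pterm \<Rightarrow> ('f, 'v) pterm \<Rightarrow> real" where
  "term_dist s t = (if s = t then 0
     else (1/2) ^ (LEAST k. \<exists>p. length p = k \<and> s p \<noteq> t p))"

text \<open>Ordinals are represented by elements of an arbitrary well-ordered type.\<close>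
definition idx_zero :: "'i::wellorder" where
  "idx_zero = (LEAST x. True)"

definition idx_succ :: "'i::wellorder \<Rightarrow> 'i" where
  "idx_succ i = (LEAST k. i < k)"

definition is_limit :: "'i::wellorder \<Rightarrow> bool" where
  "is_limit l \<longleftrightarrow> (\<exists>i. i < l) \<and> (\<forall>i<l. \<exists>k. i < k \<and> k < l)"

text \<open>A reduction of length \<alpha> is closed iff \<alpha> is zero or a successor, open iff \<alpha> is a limit.\<close>
abbreviation closed_len :: "'i::wellorder \<Rightarrow> bool" where
  "closed_len \<alpha> \<equiv> \<not> is_limit \<alpha>"

definition trs :: "('f \<Rightarrow> nat) \<Rightarrow> (('f, 'v) pterm \<times> ('f, 'v) pterm) set \<Rightarrow> bool" where
  "trs ar R \<longleftrightarrow> (\<forall>(l, r)\<in>R. wf_term ar l \<and> wf_term ar r \<and> total_term l \<and> total_term r \<and>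
      finite (pos l) \<and> (\<forall>x. l [] \<noteq> Some (VarS x)) \<and> vars_term r \<subseteq> vars_term l)"

definition rstep :: "(('f, 'v) pterm \<times> ('f, 'v) pterm) set \<Rightarrow> ('f, 'v) pterm \<Rightarrow> nat list \<Rightarrow> ('f, 'v) pterm \<Rightarrow> bool" where
  "rstep R s \<pi> t \<longleftrightarrow> \<pi> \<in> pos s \<and> (\<exists>(l, r)\<in>R. \<exists>\<sigma>.
      subterm_at s \<pi> = inst \<sigma> l \<and> t = replace_at s \<pi> (inst \<sigma> r))"

definition term_idx :: "'i::wellorder \<Rightarrow> 'i \<Rightarrow> bool" where
  "term_idx \<alpha> i \<longleftrightarrow> i < \<alpha> \<or> (closed_len \<alpha> \<and> i = \<alpha>)"

definition reduction_from ::
  "('f \<Rightarrow> nat) \<Rightarrow> (('f, 'v) pterm \<times> ('f, 'v) pterm) set \<Rightarrow> ('f, 'v) pterm \<Rightarrow>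
   'i::wellorder \<Rightarrow> ('i \<Rightarrow> ('f, 'v) pterm) \<Rightarrow> ('i \<Rightarrow> nat list) \<Rightarrow> bool" where
  "reduction_from ar R s \<alpha> t \<pi> \<longleftrightarrow> t idx_zero = s \<and>
     (\<forall>i. term_idx \<alpha> i \<longrightarrow> wf_term ar (t i)) \<and>
     (\<forall>i<\<alpha>. rstep R (t i) (\<pi> i) (t (idx_succ i)))"

definition total_red :: "'i::wellorder \<Rightarrow> ('i \<Rightarrow> ('f, 'v) pterm) \<Rightarrow> bool" where
  "total_red \<alpha> t \<longleftrightarrow> (\<forall>i. term_idx \<alpha> i \<longrightarrow> total_term (t i))"

definition ctx_term :: "('i \<Rightarrow> ('f, 'v) pterm) \<Rightarrow> ('i \<Rightarrow> nat list) \<Rightarrow> 'i \<Rightarrow> ('f, 'v) pterm" where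
  "ctx_term t \<pi> i = replace_at (t i) (\<pi> i) bot_term"

definition strongly_p_continuous ::
  "('f \<Rightarrow> nat) \<Rightarrow> 'i::wellorder \<Rightarrow> ('i \<Rightarrow> ('f, 'v) pterm) \<Rightarrow> ('i \<Rightarrow> nat list) \<Rightarrow> bool" where
  "strongly_p_continuous ar \<alpha> t \<pi> \<longleftrightarrow>
     (\<forall>l<\<alpha>. is_limit l \<longrightarrow> is_liminf ar (ctx_term t \<pi>) l (t l))"

definition strongly_p_converges ::
  "('f \<Rightarrow> nat) \<Rightarrow> 'i::wellorder \<Rightarrow> ('i \<Rightarrow> ('f, 'v) pterm) \<Rightarrow> ('i \<Rightarrow> nat list) \<Rightarrow> ('f, 'v) pterm \<Rightarrow> bool" where
  "strongly_p_converges ar \<alpha> t \<pi> u \<longleftrightarrow> strongly_p_continuous ar \<alpha> t \<pi> \<and>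
     ((closed_len \<alpha> \<and> u = t \<alpha>) \<or> (is_limit \<alpha> \<and> is_liminf ar (ctx_term t \<pi>) \<alpha> u))"

definition converges_to :: "('i::wellorder \<Rightarrow> ('f, 'v) pterm) \<Rightarrow> 'i \<Rightarrow> ('f, 'v) pterm \<Rightarrow> bool" where
  "converges_to t l u \<longleftrightarrow>
     (\<forall>e>0. \<exists>b<l. \<forall>i. b \<le> i \<and> i < l \<longrightarrow> term_dist (t i) u < e)"

definition depth_to_infinity :: "('i::wellorder \<Rightarrow> nat list) \<Rightarrow> 'i \<Rightarrow> bool" where
  "depth_to_infinity \<pi> l \<longleftrightarrow> (\<forall>n. \<exists>b<l. \<forall>i. b \<le> i \<and> i < l \<longrightarrow> n \<le> length (\<pi> i))"

definition strongly_m_continuous ::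
  "'i::wellorder \<Rightarrow> ('i \<Rightarrow> ('f, 'v) pterm) \<Rightarrow> ('i \<Rightarrow> nat list) \<Rightarrow> bool" where
  "strongly_m_continuous \<alpha> t \<pi> \<longleftrightarrow> total_red \<alpha> t \<and>
     (\<forall>l<\<alpha>. is_limit l \<longrightarrow> converges_to t l (t l) \<and> depth_to_infinity \<pi> l)"

definition strongly_m_converges ::
  "'i::wellorder \<Rightarrow> ('i \<Rightarrow> ('f, 'v) pterm) \<Rightarrow> ('i \<Rightarrow> nat list) \<Rightarrow> ('f, 'v) pterm \<Rightarrow> bool" where
  "strongly_m_converges \<alpha> t \<pi> u \<longleftrightarrow> strongly_m_continuous \<alpha> t \<pi> \<and> total_term u \<and>
     ((closed_len \<alpha> \<and> u = t \<alpha>) \<or>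
      (is_limit \<alpha> \<and> converges_to t \<alpha> u \<and> depth_to_infinity \<pi> \<alpha>))"

end

theory Submission
  imports Defs
begin

text \<open>Every position of a total limit inferior is attained by one of the greatest lower bounds,
  and a well-formed term has only finitely many positions up to any depth, so from some index on
  all contexts \<open>c\<^sub>\<iota>\<close> agree with the limit up to that depth. As the limit is total, the holes
  of these \<open>c\<^sub>\<iota>\<close> lie deeper, so the terms \<open>t\<^sub>\<iota>\<close> agree with the limit there as well and
  the redex depths tend to infinity. Conversely, metric convergence together with redex depths
  tending to infinity makes the contexts eventually agree with the limit up to every depth, and an
  explicit construction of greatest lower bounds shows that the limit is then their limit
  inferior.\<close>

section \<open>Well-formed terms\<close>

lemma wf_term_root: "wf_term ar t \<Longrightarrow> t [] \<noteq> None"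
  unfolding wf_term_def by blast

lemma wf_term_snoc:
  "wf_term ar t \<Longrightarrow> t (p @ [i]) \<noteq> None \<longleftrightarrow> (\<exists>f. t p = Some (FunS f) \<and> i < ar f)"
  unfolding wf_term_def by blast

lemma wf_term_prefix_fun:
  assumes "wf_term ar t" "t (r @ s) \<noteq> None" "s \<noteq> []"
  shows "\<exists>f. t r = Some (FunS f)"
  using assms(2,3)
proof (induction s rule: rev_induct)
  case (snoc i s)
  then obtain f where "t (r @ s) = Some (FunS f)"
    using wf_term_snoc[OF assms(1), of "r @ s" i] by auto
  then show ?case using snoc.IH by (cases "s = []") auto
qed simp

lemma strict_prefix_pos_iff: "strict_prefix_pos r p \<longleftrightarrow> (\<exists>s. s \<noteq> [] \<and> p = r @ s)"
proof
  assume "strict_prefix_pos r p"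
  then show "\<exists>s. s \<noteq> [] \<and> p = r @ s" unfolding strict_prefix_pos_def
    by (metis append_take_drop_id drop_eq_Nil leD)
qed (auto simp: strict_prefix_pos_def)

lemma strict_prefix_pos_snoc: "strict_prefix_pos r (p @ [i]) \<longleftrightarrow> r = p \<or> strict_prefix_pos r p"
  unfolding strict_prefix_pos_def by (cases "length r = length p") (auto simp: take_append)

lemma not_strict_prefix_pos_Nil: "\<not> strict_prefix_pos r []"
  unfolding strict_prefix_pos_def by simp

lemma finite_positions_upto: "wf_term ar u \<Longrightarrow> finite {p. u p \<noteq> None \<and> length p \<le> d}"
proof (induction d)
  case 0
  have "{p. u p \<noteq> None \<and> length p \<le> 0} \<subseteq> {[]}" by auto
  then show ?case using finite_subset by blast
next
  case (Suc d)
  let ?S = "{p. u p \<noteq> None \<and> length p \<le> d}"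
  let ?arity = "\<lambda>q. case u q of Some (FunS f) \<Rightarrow> ar f | _ \<Rightarrow> 0"
  have "{p. u p \<noteq> None \<and> length p \<le> Suc d} \<subseteq> ?S \<union> (\<Union>q\<in>?S. (\<lambda>i. q @ [i]) ` {..<?arity q})"
  proof
    fix p assume p: "p \<in> {p. u p \<noteq> None \<and> length p \<le> Suc d}"
    show "p \<in> ?S \<union> (\<Union>q\<in>?S. (\<lambda>i. q @ [i]) ` {..<?arity q})"
    proof (cases "length p \<le> d")
      case False
      then obtain q i where qi: "p = q @ [i]" by (metis le0 list.size(3) rev_exhaust)
      then obtain f where "u q = Some (FunS f)" "i < ar f"
        using wf_term_snoc[OF Suc.prems] p by blast
      then show ?thesis using p qi by auto
    qed (use p in auto)
  qed
  moreover have "finite (?S \<union> (\<Union>q\<in>?S. (\<lambda>i. q @ [i]) ` {..<?arity q}))" using Suc by simp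
  ultimately show ?case using finite_subset by blast
qed

lemma wf_replace_at_bot:
  assumes wt: "wf_term ar t" and q: "q \<in> pos t"
  shows "wf_term ar (replace_at t q bot_term)"
proof -
  let ?c = "replace_at t q bot_term"
  have c: "?c p = (if take (length q) p = q then (if length p = length q then Some BotS else None)
                   else t p)" for p
    by (auto simp: replace_at_def bot_term_def dest!: arg_cong[where f = length])
  have "?c (p @ [i]) \<noteq> None \<longleftrightarrow> (\<exists>f. ?c p = Some (FunS f) \<and> i < ar f)" for p i
  proof (cases "take (length q) p = q")
    case True
    then have "take (length q) (p @ [i]) = q"
      by (metis append.assoc append_eq_conv_conj append_take_drop_id)
    then show ?thesis using c[of p] c[of "p @ [i]"] True
      by (auto dest!: arg_cong[where f = length])
  next
    case False
    show ?thesis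
    proof (cases "take (length q) (p @ [i]) = q")
      case True
      then have "q = p @ [i]" using False
        by (metis butlast_snoc linorder_le_less_linear take_all take_butlast)
      then show ?thesis using c[of p] c[of "p @ [i]"] False q wf_term_snoc[OF wt]
        unfolding pos_def by auto
    qed (use c[of p] c[of "p @ [i]"] False wf_term_snoc[OF wt] in auto)
  qed
  moreover have "?c [] \<noteq> None" using c[of "[]"] wf_term_root[OF wt] by (cases q) auto
  ultimately show ?thesis unfolding wf_term_def by blast
qed

section \<open>The approximation order\<close>

lemma le_bot_agree: "le_bot s t \<Longrightarrow> s p \<noteq> None \<Longrightarrow> s p \<noteq> Some BotS \<Longrightarrow> s p = t p"
  unfolding le_bot_def by (auto split: if_splits)

context
  fixes ar :: "'f \<Rightarrow> nat" and s t :: "('f, 'v) pterm"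
  assumes ws: "wf_term ar s" and wt: "wf_term ar t"
    and agree: "\<forall>p. s p \<noteq> None \<longrightarrow> s p = Some BotS \<or> s p = t p"
begin

private lemma defined_in_upper: "s p \<noteq> None \<Longrightarrow> t p \<noteq> None"
proof (induction p rule: rev_induct)
  case (snoc i q)
  then obtain f where "s q = Some (FunS f)" "i < ar f" using wf_term_snoc[OF ws] by blast
  then have "t q = Some (FunS f)" using agree by force
  then show ?case using \<open>i < ar f\<close> wf_term_snoc[OF wt] by blast
qed (use wf_term_root[OF wt] in simp)

private lemma undefined_in_upper:
  "s p = None \<Longrightarrow> \<not> (\<exists>q. strict_prefix_pos q p \<and> s q = Some BotS) \<Longrightarrow> t p = None"
proof (induction p rule: rev_induct)
  case (snoc i q)
  show ?case
  proof (cases "s q = None")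
    case True
    then have "t q = None" using snoc strict_prefix_pos_snoc by blast
    then show ?thesis using wf_term_snoc[OF wt, of q i] by auto
  next
    case False
    then have "s q \<noteq> Some BotS" using snoc.prems(2) strict_prefix_pos_snoc by blast
    then have "t q = s q" using False agree by force
    then show ?thesis using snoc.prems(1) wf_term_snoc[OF ws, of q i] wf_term_snoc[OF wt, of q i]
      by auto
  qed
qed (use wf_term_root[OF ws] in simp)

lemma le_bot_intro: "le_bot s t"
proof -
  let ?P = "{p. s p = Some BotS}"
  have "s p = (if \<exists>q\<in>?P. strict_prefix_pos q p then None else if p \<in> ?P then Some BotS else t p)"
    for p
  proof (cases "\<exists>q\<in>?P. strict_prefix_pos q p")
    case True
    then obtain q r where "s q = Some BotS" "r \<noteq> []" "p = q @ r" using strict_prefix_pos_iff by auto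
    then have "s p = None" using wf_term_prefix_fun[OF ws, of q r] by fastforce
    then show ?thesis using True by simp
  next
    case False
    show ?thesis
    proof (cases "s p = None")
      case True
      then have "t p = None" using False undefined_in_upper[of p] by blast
      then show ?thesis using True by simp
    qed (use False agree in auto)
  qed
  moreover have "?P \<subseteq> pos t" using defined_in_upper unfolding pos_def by auto
  ultimately show ?thesis unfolding le_bot_def by blast
qed

end

section \<open>Agreement up to a depth and metric convergence\<close>

definition agree_upto :: "nat \<Rightarrow> ('f, 'v) pterm \<Rightarrow> ('f, 'v) pterm \<Rightarrow> bool" where
  "agree_upto d s u \<longleftrightarrow> (\<forall>p. length p \<le> d \<longrightarrow> s p = u p)"

lemma term_dist_less_iff_agree_upto: "term_dist s u < (1/2) ^ d \<longleftrightarrow> agree_upto d s u"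
proof (cases "s = u")
  case False
  let ?K = "LEAST k. \<exists>p. length p = k \<and> s p \<noteq> u p"
  have dist: "term_dist s u = (1/2) ^ ?K" using False unfolding term_dist_def by simp
  show ?thesis
  proof
    assume "term_dist s u < (1/2) ^ d"
    then have "d < ?K" using dist by simp
    show "agree_upto d s u" unfolding agree_upto_def
    proof (intro allI impI)
      fix p :: "nat list" assume "length p \<le> d"
      show "s p = u p"
      proof (rule ccontr)
        assume "s p \<noteq> u p"
        then have "?K \<le> length p" by (intro Least_le) blast
        then show False using \<open>d < ?K\<close> \<open>length p \<le> d\<close> by simp
      qed
    qed
  next
    assume "agree_upto d s u"
    have "\<exists>k p. length p = k \<and> s p \<noteq> u p" using False by auto
    from LeastI_ex[OF this] obtain p where "length p = ?K" "s p \<noteq> u p" by blast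
    then have "d < ?K" using \<open>agree_upto d s u\<close> unfolding agree_upto_def by (metis not_less)
    then show "term_dist s u < (1/2) ^ d" using dist by simp
  qed
qed (simp add: term_dist_def agree_upto_def)

definition eventually_before :: "'i::wellorder \<Rightarrow> ('i \<Rightarrow> bool) \<Rightarrow> bool" where
  "eventually_before l P \<longleftrightarrow> (\<exists>b<l. \<forall>i. b \<le> i \<and> i < l \<longrightarrow> P i)"

lemma eventually_before_mono:
  "eventually_before l P \<Longrightarrow> (\<And>i. i < l \<Longrightarrow> P i \<Longrightarrow> Q i) \<Longrightarrow> eventually_before l Q"
  unfolding eventually_before_def by blast

lemma eventually_before_conj:
  assumes "eventually_before l P" "eventually_before l Q"
  shows "eventually_before l (\<lambda>i. P i \<and> Q i)"
proof -
  obtain b c where "b < l" "c < l" "\<forall>i. b \<le> i \<and> i < l \<longrightarrow> P i" "\<forall>i. c \<le> i \<and> i < l \<longrightarrow> Q i"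
    using assms unfolding eventually_before_def by blast
  then show ?thesis unfolding eventually_before_def by (intro exI[of _ "max b c"]) auto
qed

lemma eventually_before_ball:
  "finite S \<Longrightarrow> S \<noteq> {} \<Longrightarrow> (\<And>x. x \<in> S \<Longrightarrow> eventually_before l (P x)) \<Longrightarrow>
    eventually_before l (\<lambda>i. \<forall>x\<in>S. P x i)"
proof (induction S rule: finite_ne_induct)
  case (insert x S)
  then show ?case using eventually_before_conj[of l "P x"] by simp
qed simp

lemma converges_to_iff_agree_upto:
  "converges_to t l u \<longleftrightarrow> (\<forall>d. eventually_before l (\<lambda>i. agree_upto d (t i) u))"
proof
  assume conv: "converges_to t l u"
  show "\<forall>d. eventually_before l (\<lambda>i. agree_upto d (t i) u)"
  proof
    fix d
    have "(0 :: real) < (1/2) ^ d" by simp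
    then obtain b where "b < l" "\<forall>i. b \<le> i \<and> i < l \<longrightarrow> term_dist (t i) u < (1/2) ^ d"
      using conv unfolding converges_to_def by blast
    then show "eventually_before l (\<lambda>i. agree_upto d (t i) u)"
      unfolding eventually_before_def term_dist_less_iff_agree_upto by blast
  qed
next
  assume agree: "\<forall>d. eventually_before l (\<lambda>i. agree_upto d (t i) u)"
  show "converges_to t l u" unfolding converges_to_def
  proof (intro allI impI)
    fix e :: real assume "e > 0"
    then obtain d where d: "(1/2 :: real) ^ d < e" using real_arch_pow_inv[of e "1/2"] by auto
    have close: "term_dist s u < e" if "agree_upto d s u" for s
    proof -
      have "term_dist s u < (1/2) ^ d" using that term_dist_less_iff_agree_upto by blast
      then show ?thesis using d by linarith
    qed
    have "eventually_before l (\<lambda>i. agree_upto d (t i) u)" using agree by blast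
    then have "eventually_before l (\<lambda>i. term_dist (t i) u < e)"
      by (rule eventually_before_mono) (rule close)
    then show "\<exists>b<l. \<forall>i. b \<le> i \<and> i < l \<longrightarrow> term_dist (t i) u < e"
      unfolding eventually_before_def .
  qed
qed

lemma depth_to_infinity_iff: "depth_to_infinity \<pi> l \<longleftrightarrow> (\<forall>n. eventually_before l (\<lambda>i. n \<le> length (\<pi> i)))"
  unfolding depth_to_infinity_def eventually_before_def by (rule refl)

lemma agree_upto_if_agree_on_positions:
  assumes ws: "wf_term ar s" and wu: "wf_term ar u"
    and agree: "\<forall>p. u p \<noteq> None \<and> length p \<le> d \<longrightarrow> s p = u p"
  shows "agree_upto d s u"
  unfolding agree_upto_def
proof (intro allI impI)
  fix p :: "nat list"
  show "length p \<le> d \<Longrightarrow> s p = u p"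
  proof (induction p rule: rev_induct)
    case (snoc i q)
    then have "s q = u q" by simp
    then have "s (q @ [i]) = None" if "u (q @ [i]) = None"
      using that wf_term_snoc[OF ws, of q i] wf_term_snoc[OF wu, of q i] by force
    then show ?case using snoc.prems agree by (cases "u (q @ [i]) = None") simp_all
  qed (use agree[rule_format, of "[]"] wf_term_root[OF wu] in simp)
qed

lemma wf_term_if_eventually_agree:
  assumes wa: "\<forall>i<l. wf_term ar (a i)"
    and agree: "\<forall>d. eventually_before l (\<lambda>i. agree_upto d (a i) u)"
  shows "wf_term ar u"
proof -
  have witness: "\<exists>i<l. wf_term ar (a i) \<and> agree_upto d (a i) u" for d
  proof -
    obtain b where "b < l" "\<forall>i. b \<le> i \<and> i < l \<longrightarrow> agree_upto d (a i) u"
      using agree unfolding eventually_before_def by blast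
    then show ?thesis using wa by blast
  qed
  have "u [] \<noteq> None"
  proof -
    obtain i where "wf_term ar (a i)" "agree_upto 0 (a i) u" using witness by blast
    then show ?thesis using wf_term_root[of ar "a i"] unfolding agree_upto_def by simp
  qed
  moreover have "u (p @ [j]) \<noteq> None \<longleftrightarrow> (\<exists>f. u p = Some (FunS f) \<and> j < ar f)" for p j
  proof -
    obtain i where "wf_term ar (a i)" "agree_upto (Suc (length p)) (a i) u"
      using witness by blast
    then show ?thesis using wf_term_snoc[of ar "a i" p j] unfolding agree_upto_def by simp
  qed
  ultimately show ?thesis unfolding wf_term_def by blast
qed

section \<open>Greatest lower bounds and limits inferior\<close>

text \<open>Keep the common symbol wherever all terms agree along a path of shared function symbols,
  and put \<open>BotS\<close> at the first disagreement.\<close>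
definition glb_term :: "('f, 'v) pterm set \<Rightarrow> ('f, 'v) pterm" where
  "glb_term A = (\<lambda>p. if \<forall>r. strict_prefix_pos r p \<longrightarrow> (\<exists>f. \<forall>a\<in>A. a r = Some (FunS f))
     then (if \<forall>a\<in>A. a p = (SOME a. a \<in> A) p then (SOME a. a \<in> A) p else Some BotS) else None)"

context
  fixes ar :: "'f \<Rightarrow> nat" and A :: "('f, 'v) pterm set"
  assumes ne: "A \<noteq> {}" and wA: "\<forall>a\<in>A. wf_term ar a"
begin

private definition shared_above :: "nat list \<Rightarrow> bool" where
  "shared_above p \<longleftrightarrow> (\<forall>r. strict_prefix_pos r p \<longrightarrow> (\<exists>f. \<forall>a\<in>A. a r = Some (FunS f)))"

private lemma shared_above_snoc:
  "shared_above (p @ [i]) \<longleftrightarrow> shared_above p \<and> (\<exists>f. \<forall>a\<in>A. a p = Some (FunS f))"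
  unfolding shared_above_def strict_prefix_pos_snoc by auto

private lemma glb_term_eq: "glb_term A p = (if shared_above p then
    (if \<forall>a\<in>A. a p = (SOME a. a \<in> A) p then (SOME a. a \<in> A) p else Some BotS) else None)"
  unfolding glb_term_def shared_above_def by (rule refl)

private lemma shared_above_if_glb_term_defined: "glb_term A p \<noteq> None \<Longrightarrow> shared_above p"
  unfolding glb_term_eq by (cases "shared_above p") simp_all

private lemma some_in: "(SOME a. a \<in> A) \<in> A"
  using ne by (simp add: some_in_eq)

private lemma glb_term_common:
  assumes "shared_above p" "\<forall>a\<in>A. a p = v"
  shows "glb_term A p = v"
proof -
  have eq: "(SOME a. a \<in> A) p = v" using assms(2) some_in by blast
  have all: "\<forall>a\<in>A. a p = (SOME a. a \<in> A) p"
  proof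
    fix a assume "a \<in> A"
    then have "a p = v" using assms(2) by blast
    then show "a p = (SOME a. a \<in> A) p" using eq by (simp only:)
  qed
  show ?thesis unfolding glb_term_eq if_P[OF assms(1)] if_P[OF all] by (rule eq)
qed

private lemma glb_term_member:
  assumes "shared_above p" "glb_term A p \<noteq> Some BotS" "a \<in> A"
  shows "a p = glb_term A p"
proof -
  let ?a0 = "SOME a. a \<in> A"
  have all: "\<forall>a\<in>A. a p = ?a0 p"
  proof (rule ccontr)
    assume disagree: "\<not> (\<forall>a\<in>A. a p = ?a0 p)"
    have "glb_term A p = Some BotS"
      unfolding glb_term_eq by (simp only: if_P[OF assms(1)] if_not_P[OF disagree])
    then show False using assms(2) by simp
  qed
  then have "a p = ?a0 p" using assms(3) by blast
  moreover have "glb_term A p = ?a0 p" using glb_term_common[OF assms(1) all] .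
  ultimately show ?thesis by (simp only:)
qed

private lemma glb_term_defined:
  assumes "shared_above p" "a \<in> A" "a p \<noteq> None"
  shows "glb_term A p \<noteq> None"
proof (cases "glb_term A p = Some BotS")
  case False
  then show ?thesis using glb_term_member[OF assms(1) False assms(2)] assms(3) by simp
qed simp

lemma wf_term_glb_term: "wf_term ar (glb_term A)"
proof -
  obtain a0 where a0: "a0 \<in> A" using ne by blast
  then have wa0: "wf_term ar a0" using wA by blast
  have "shared_above []" unfolding shared_above_def using not_strict_prefix_pos_Nil by blast
  then have "glb_term A [] \<noteq> None" using a0 wf_term_root[OF wa0] by (rule glb_term_defined)
  moreover have "glb_term A (p @ [i]) \<noteq> None \<longleftrightarrow> (\<exists>f. glb_term A p = Some (FunS f) \<and> i < ar f)"
    for p i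
  proof
    assume defined: "glb_term A (p @ [i]) \<noteq> None"
    then have shared: "shared_above (p @ [i])" by (rule shared_above_if_glb_term_defined)
    from shared_above_snoc[THEN iffD1, OF shared]
    obtain f where "shared_above p" and f: "\<forall>a\<in>A. a p = Some (FunS f)" by blast
    then have "glb_term A p = Some (FunS f)" by (rule glb_term_common)
    moreover obtain a where a: "a \<in> A" "a (p @ [i]) \<noteq> None"
      using defined glb_term_common[OF shared, of None] by fastforce
    have "wf_term ar a" using wA a(1) by blast
    then obtain g where "a p = Some (FunS g)" "i < ar g" using wf_term_snoc[of ar a p i] a(2) by blast
    then have "i < ar f" using f a(1) by auto
    ultimately show "\<exists>f. glb_term A p = Some (FunS f) \<and> i < ar f" by blast
  next
    assume "\<exists>f. glb_term A p = Some (FunS f) \<and> i < ar f"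
    then obtain f where gp: "glb_term A p = Some (FunS f)" and "i < ar f" by blast
    then have shared: "shared_above p" by (intro shared_above_if_glb_term_defined) simp
    have f: "a p = Some (FunS f)" if "a \<in> A" for a
      using glb_term_member[OF shared _ that] gp by simp
    then have "shared_above (p @ [i])" using shared shared_above_snoc[of p i] by blast
    moreover have "a0 (p @ [i]) \<noteq> None" using wf_term_snoc[OF wa0, of p i] f[OF a0] \<open>i < ar f\<close> by blast
    ultimately show "glb_term A (p @ [i]) \<noteq> None" using glb_term_defined a0 by blast
  qed
  ultimately show ?thesis unfolding wf_term_def by blast
qed

private lemma shared_above_if_agree:
  assumes "wf_term ar w" "w p \<noteq> None" "\<forall>a\<in>A. \<forall>r. strict_prefix_pos r p \<longrightarrow> a r = w r"
  shows "shared_above p"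
  unfolding shared_above_def
proof (intro allI impI)
  fix r assume "strict_prefix_pos r p"
  moreover obtain s where "s \<noteq> []" "p = r @ s" using calculation strict_prefix_pos_iff by blast
  then obtain f where "w r = Some (FunS f)" using wf_term_prefix_fun[OF assms(1)] assms(2) by blast
  ultimately show "\<exists>f. \<forall>a\<in>A. a r = Some (FunS f)" using assms(3) by auto
qed

lemma is_glb_glb_term: "is_glb ar A (glb_term A)"
proof -
  have lower: "le_bot (glb_term A) a" if a: "a \<in> A" for a
  proof (rule le_bot_intro[OF wf_term_glb_term])
    show "wf_term ar a" using wA a by blast
    show "\<forall>p. glb_term A p \<noteq> None \<longrightarrow> glb_term A p = Some BotS \<or> glb_term A p = a p"
      using glb_term_member[OF shared_above_if_glb_term_defined _ a] by metis
  qed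
  have greatest: "le_bot y (glb_term A)" if wy: "wf_term ar y" and below: "\<forall>a\<in>A. le_bot y a" for y
  proof (rule le_bot_intro[OF wy wf_term_glb_term], intro allI impI)
    fix p assume yp: "y p \<noteq> None"
    show "y p = Some BotS \<or> y p = glb_term A p"
    proof (cases "y p = Some BotS")
      case False
      have "\<forall>a\<in>A. \<forall>r. strict_prefix_pos r p \<longrightarrow> a r = y r"
      proof (intro ballI allI impI)
        fix a r assume "a \<in> A" "strict_prefix_pos r p"
        moreover obtain s where "s \<noteq> []" "p = r @ s" using calculation(2) strict_prefix_pos_iff by blast
        then obtain f where "y r = Some (FunS f)" using wf_term_prefix_fun[OF wy] yp by blast
        ultimately show "a r = y r" using le_bot_agree[of y a r] below by auto
      qed
      then have "shared_above p" using shared_above_if_agree[OF wy yp] by blast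
      moreover have "\<forall>a\<in>A. a p = y p" using le_bot_agree[of y _ p] below yp False by auto
      ultimately show ?thesis using glb_term_common by auto
    qed simp
  qed
  show ?thesis unfolding is_glb_def using wf_term_glb_term lower greatest by blast
qed

lemma glb_term_agree:
  assumes wu: "wf_term ar u" and up: "u p \<noteq> None" and agree: "\<forall>a\<in>A. agree_upto (length p) a u"
  shows "glb_term A p = u p"
proof -
  have eq: "a q = u q" if "a \<in> A" "length q \<le> length p" for a q
    using agree that unfolding agree_upto_def by blast
  then have "shared_above p"
    using shared_above_if_agree[OF wu up] unfolding strict_prefix_pos_def by auto
  then show ?thesis using glb_term_common eq by blast
qed

end

lemma lub_total_attained:
  assumes lub: "is_lub ar G u" and wG: "\<forall>g\<in>G. wf_term ar g"
    and tu: "total_term u" and up: "u p \<noteq> None"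
  shows "\<exists>g\<in>G. g p = u p"
proof (rule ccontr)
  assume missed: "\<not> (\<exists>g\<in>G. g p = u p)"
  \<comment> \<open>then \<open>u\<close> with a hole at \<open>p\<close> is still an upper bound of \<open>G\<close>, yet strictly below \<open>u\<close>\<close>
  define y where "y = replace_at u p bot_term"
  have wu: "wf_term ar u" using lub unfolding is_lub_def by blast
  have wy: "wf_term ar y" unfolding y_def using wf_replace_at_bot[OF wu] up unfolding pos_def by blast
  have "le_bot g y" if g: "g \<in> G" for g
  proof (rule le_bot_intro[OF _ wy], use wG g in blast, intro allI impI)
    have gu: "le_bot g u" using lub g unfolding is_lub_def by blast
    fix q assume gq: "g q \<noteq> None"
    show "g q = Some BotS \<or> g q = y q"
    proof (cases "g q = Some BotS")
      case False
      have "take (length p) q \<noteq> p"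
      proof
        assume "take (length p) q = p"
        then obtain s where q: "q = p @ s" by (metis append_take_drop_id)
        have "g p \<noteq> None \<and> g p \<noteq> Some BotS"
        proof (cases "s = []")
          case False
          then show ?thesis using wf_term_prefix_fun[of ar g p s] wG g gq q by fastforce
        qed (use q gq \<open>g q \<noteq> Some BotS\<close> in simp)
        then show False using le_bot_agree[OF gu] missed g by blast
      qed
      then show ?thesis using le_bot_agree[OF gu gq False] unfolding y_def replace_at_def by simp
    qed simp
  qed
  then have "le_bot u y" using lub wy unfolding is_lub_def by blast
  moreover have "y p = Some BotS" unfolding y_def replace_at_def bot_term_def by simp
  ultimately show False using le_bot_agree[of u y p] up tu unfolding total_term_def by simp
qed

lemma liminf_total_eventually_agree:
  assumes wa: "\<forall>i<l. wf_term ar (a i)" and li: "is_liminf ar a l u" and tu: "total_term u"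
  shows "eventually_before l (\<lambda>i. agree_upto d (a i) u)"
proof -
  obtain g where glb: "\<forall>\<beta><l. is_glb ar {a \<iota> | \<iota>. \<beta> \<le> \<iota> \<and> \<iota> < l} (g \<beta>)"
    and lub: "is_lub ar (g ` {\<beta>. \<beta> < l}) u"
    using li unfolding is_liminf_def by blast
  have wu: "wf_term ar u" using lub unfolding is_lub_def by blast
  have attained: "eventually_before l (\<lambda>i. a i p = u p)" if up: "u p \<noteq> None" for p
  proof -
    have "\<forall>x\<in>g ` {\<beta>. \<beta> < l}. wf_term ar x" using glb unfolding is_glb_def by blast
    then obtain \<beta> where \<beta>: "\<beta> < l" "g \<beta> p = u p" using lub_total_attained[OF lub _ tu up] by blast
    have "a \<iota> p = u p" if "\<beta> \<le> \<iota>" "\<iota> < l" for \<iota>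
    proof -
      have "le_bot (g \<beta>) (a \<iota>)" using glb \<beta>(1) that unfolding is_glb_def by blast
      then show ?thesis using le_bot_agree[of "g \<beta>" "a \<iota>" p] \<beta>(2) up tu
        unfolding total_term_def by simp
    qed
    then show ?thesis unfolding eventually_before_def using \<beta>(1) by blast
  qed
  let ?P = "{p. u p \<noteq> None \<and> length p \<le> d}"
  have "eventually_before l (\<lambda>i. \<forall>p\<in>?P. a i p = u p)"
    by (rule eventually_before_ball)
      (use finite_positions_upto[OF wu] wf_term_root[OF wu] attained in auto)
  then show ?thesis
  proof (rule eventually_before_mono)
    fix i assume "i < l" "\<forall>p\<in>?P. a i p = u p"
    then show "agree_upto d (a i) u" using agree_upto_if_agree_on_positions[OF _ wu] wa by blast
  qed
qed

lemma eventually_agree_liminf: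
  assumes wa: "\<forall>i<l. wf_term ar (a i)" and wu: "wf_term ar u"
    and agree: "\<forall>d. eventually_before l (\<lambda>i. agree_upto d (a i) u)"
  shows "is_liminf ar a l u"
proof -
  define A where "A \<beta> = {a \<iota> | \<iota>. \<beta> \<le> \<iota> \<and> \<iota> < l}" for \<beta>
  define g where "g \<beta> = glb_term (A \<beta>)" for \<beta>
  have A_ne: "A \<beta> \<noteq> {}" and wA: "\<forall>x\<in>A \<beta>. wf_term ar x" if "\<beta> < l" for \<beta>
    using that wa unfolding A_def by auto
  have glb: "is_glb ar (A \<beta>) (g \<beta>)" if "\<beta> < l" for \<beta>
    unfolding g_def using is_glb_glb_term[OF A_ne[OF that] wA[OF that]] .
  have "le_bot (g \<beta>) u" if \<beta>: "\<beta> < l" for \<beta>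
  proof (rule le_bot_intro[OF _ wu], use glb[OF \<beta>] in \<open>simp add: is_glb_def\<close>, intro allI impI)
    fix p assume gp: "g \<beta> p \<noteq> None"
    obtain b where "b < l" and b: "\<forall>i. b \<le> i \<and> i < l \<longrightarrow> agree_upto (length p) (a i) u"
      using agree unfolding eventually_before_def by blast
    then have \<iota>: "\<beta> \<le> max \<beta> b" "max \<beta> b < l" using \<beta> by auto
    then have "le_bot (g \<beta>) (a (max \<beta> b))" using glb[OF \<beta>] unfolding is_glb_def A_def by blast
    moreover have "a (max \<beta> b) p = u p" using b \<iota> unfolding agree_upto_def by simp
    ultimately show "g \<beta> p = Some BotS \<or> g \<beta> p = u p"
      using le_bot_agree[of "g \<beta>" "a (max \<beta> b)" p] gp by auto
  qed
  moreover have "le_bot u y" if wy: "wf_term ar y" and above: "\<forall>x\<in>g ` {\<beta>. \<beta> < l}. le_bot x y" for y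
  proof (rule le_bot_intro[OF wu wy], intro allI impI)
    fix p assume up: "u p \<noteq> None"
    obtain b where b: "b < l" "\<forall>i. b \<le> i \<and> i < l \<longrightarrow> agree_upto (length p) (a i) u"
      using agree unfolding eventually_before_def by blast
    then have "\<forall>x\<in>A b. agree_upto (length p) x u" unfolding A_def by blast
    then have "g b p = u p" unfolding g_def using glb_term_agree[OF A_ne wA wu up] b(1) by blast
    moreover have "le_bot (g b) y" using above b(1) by blast
    ultimately show "u p = Some BotS \<or> u p = y p" using le_bot_agree[of "g b" y p] up by auto
  qed
  ultimately have "is_lub ar (g ` {\<beta>. \<beta> < l}) u" unfolding is_lub_def using wu by blast
  then show ?thesis unfolding is_liminf_def using glb unfolding A_def by blast
qed

section \<open>Contexts of a reduction\<close>

lemma agree_upto_ctx_term_iff: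
  assumes "total_term u"
  shows "agree_upto d (ctx_term t \<pi> i) u \<longleftrightarrow> d < length (\<pi> i) \<and> agree_upto d (t i) u"
proof -
  have hole: "ctx_term t \<pi> i (\<pi> i) = Some BotS"
    unfolding ctx_term_def replace_at_def bot_term_def by simp
  have above: "ctx_term t \<pi> i p = t i p" if "length p < length (\<pi> i)" for p
    using that unfolding ctx_term_def replace_at_def by auto
  have "d < length (\<pi> i)" if "agree_upto d (ctx_term t \<pi> i) u"
    using that hole assms unfolding agree_upto_def total_term_def by (metis not_less)
  then show ?thesis using above unfolding agree_upto_def by fastforce
qed

lemma eventually_agree_ctx_term_iff:
  assumes "total_term u"
  shows "(\<forall>d. eventually_before l (\<lambda>i. agree_upto d (ctx_term t \<pi> i) u)) \<longleftrightarrow>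
    converges_to t l u \<and> depth_to_infinity \<pi> l"
  unfolding converges_to_iff_agree_upto depth_to_infinity_iff agree_upto_ctx_term_iff[OF assms]
proof (intro iffI conjI allI)
  fix d
  assume "\<forall>d. eventually_before l (\<lambda>i. d < length (\<pi> i) \<and> agree_upto d (t i) u)"
  then have "eventually_before l (\<lambda>i. d < length (\<pi> i) \<and> agree_upto d (t i) u)" ..
  then show "eventually_before l (\<lambda>i. agree_upto d (t i) u)"
    and "eventually_before l (\<lambda>i. d \<le> length (\<pi> i))"
    by (auto elim: eventually_before_mono)
next
  fix d
  assume "(\<forall>d. eventually_before l (\<lambda>i. agree_upto d (t i) u)) \<and>
    (\<forall>n. eventually_before l (\<lambda>i. n \<le> length (\<pi> i)))"
  then have "eventually_before l (\<lambda>i. Suc d \<le> length (\<pi> i) \<and> agree_upto d (t i) u)"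
    by (intro eventually_before_conj) auto
  then show "eventually_before l (\<lambda>i. d < length (\<pi> i) \<and> agree_upto d (t i) u)"
    by (rule eventually_before_mono) simp
qed

lemma liminf_ctx_term_iff:
  assumes red: "\<forall>i<l. wf_term ar (t i) \<and> \<pi> i \<in> pos (t i)" and tu: "total_term u"
  shows "is_liminf ar (ctx_term t \<pi>) l u \<longleftrightarrow> converges_to t l u \<and> depth_to_infinity \<pi> l"
proof -
  have wc: "\<forall>i<l. wf_term ar (ctx_term t \<pi> i)"
    using red wf_replace_at_bot unfolding ctx_term_def by blast
  show ?thesis
  proof
    assume "is_liminf ar (ctx_term t \<pi>) l u"
    then have "\<forall>d. eventually_before l (\<lambda>i. agree_upto d (ctx_term t \<pi> i) u)"
      using liminf_total_eventually_agree[OF wc _ tu] by blast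
    then show "converges_to t l u \<and> depth_to_infinity \<pi> l"
      by (rule eventually_agree_ctx_term_iff[OF tu, THEN iffD1])
  next
    assume limit: "converges_to t l u \<and> depth_to_infinity \<pi> l"
    then have "wf_term ar u"
      using wf_term_if_eventually_agree[of l ar t u] red converges_to_iff_agree_upto by blast
    moreover have "\<forall>d. eventually_before l (\<lambda>i. agree_upto d (ctx_term t \<pi> i) u)"
      using limit by (rule eventually_agree_ctx_term_iff[OF tu, THEN iffD2])
    ultimately show "is_liminf ar (ctx_term t \<pi>) l u" by (rule eventually_agree_liminf[OF wc])
  qed
qed

lemma reduction_from_wf_redex:
  "reduction_from ar R s \<alpha> t \<pi> \<Longrightarrow> i < \<alpha> \<Longrightarrow> wf_term ar (t i) \<and> \<pi> i \<in> pos (t i)"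
  unfolding reduction_from_def rstep_def term_idx_def by blast

theorem theorem4p12:
  fixes ar :: "'f \<Rightarrow> nat"
    and R :: "(('f, 'v) pterm \<times> ('f, 'v) pterm) set"
    and s :: "('f, 'v) pterm"
    and \<alpha> :: "'i::wellorder"
    and t :: "'i \<Rightarrow> ('f, 'v) pterm"
    and \<pi> :: "'i \<Rightarrow> nat list"
  assumes "trs ar R"
    and "reduction_from ar R s \<alpha> t \<pi>"
  shows "(strongly_p_continuous ar \<alpha> t \<pi> \<and> total_red \<alpha> t \<longleftrightarrow> strongly_m_continuous \<alpha> t \<pi>)
       \<and> (\<forall>u. strongly_p_converges ar \<alpha> t \<pi> u \<and> total_red \<alpha> t \<and> total_term u
               \<longleftrightarrow> strongly_m_converges \<alpha> t \<pi> u)"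
proof -
  have limit_iff: "is_liminf ar (ctx_term t \<pi>) l u \<longleftrightarrow> converges_to t l u \<and> depth_to_infinity \<pi> l"
    if "l \<le> \<alpha>" "total_term u" for l u
  proof (rule liminf_ctx_term_iff[OF _ that(2)])
    show "\<forall>i<l. wf_term ar (t i) \<and> \<pi> i \<in> pos (t i)"
      using reduction_from_wf_redex[OF assms(2)] that(1) by auto
  qed
  have total_before: "total_term (t l)" if "total_red \<alpha> t" "l < \<alpha>" for l
    using that unfolding total_red_def term_idx_def by blast
  have continuous: "strongly_p_continuous ar \<alpha> t \<pi> \<and> total_red \<alpha> t \<longleftrightarrow> strongly_m_continuous \<alpha> t \<pi>"
    unfolding strongly_p_continuous_def strongly_m_continuous_def
    using limit_iff[OF less_imp_le total_before] by blast
  show ?thesis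
    unfolding strongly_p_converges_def strongly_m_converges_def
    using continuous limit_iff[OF order_refl] unfolding strongly_m_continuous_def by blast
qed

end
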